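(* For every positive integer $t$, \[ g(3,t)\ge \frac{16t^2+7t+1}{24t^2+15t+3}. \]
   Context: Let $\mathbb{F}$ be a finite field and $x_1,\dots,x_p$ a basis of $\mathbb{F}^p$. A $[t\times m,p]$ array code is a $t\times m$ array whose entries (cells) are linear combinations of $x_1,\dots,x_p$. It has the $k$-PIR property (is a $[t\times m,p]$ $k$-PIR array code) if for every $i\in\{1,\dots,p\}$ there exist $k$ pairwise disjoint sets $S_1,\dots,S_k$ of columns such that for every $j$ the vector $x_i$ lies in the linear span of all entries of the columns in $S_j$. Its PIR rate is $k/m$. For a rational $s>1$ and a positive integer $t$ with $st$ an integer, $g(s,t)$ is the largest PIR rate $k/m$ of a $[t\times m,st]$ $k$-PIR array code (over all finite fields, all $m$ and all $k$). *)

theory Defs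
  imports Complex_Main "HOL-Algebra.Ring"
begin

text \<open>A finite field is represented (up to isomorphism) as a HOL-Algebra ring
  structure R with carrier a finite set of naturals. A [t x m, p] array code over R
  is a function C, where C r j l is the coefficient of x_l in the cell in row r
  (r < t) and column j (j < m), for l < p.\<close>

definition array_code :: "nat ring \<Rightarrow> nat \<Rightarrow> nat \<Rightarrow> nat \<Rightarrow> (nat \<Rightarrow> nat \<Rightarrow> nat \<Rightarrow> nat) \<Rightarrow> bool" where
  "array_code R t m p C \<longleftrightarrow> (\<forall>r<t. \<forall>j<m. \<forall>l<p. C r j l \<in> carrier R)"

definition in_span_of_columns ::
  "nat ring \<Rightarrow> nat \<Rightarrow> nat \<Rightarrow> (nat \<Rightarrow> nat \<Rightarrow> nat \<Rightarrow> nat) \<Rightarrow> nat \<Rightarrow> nat set \<Rightarrow> bool" where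
  "in_span_of_columns R t p C i S \<longleftrightarrow>
     (\<exists>c. (\<forall>r j. c r j \<in> carrier R) \<and>
          (\<forall>l<p. finsum R (\<lambda>(r, j). c r j \<otimes>\<^bsub>R\<^esub> C r j l) ({..<t} \<times> S)
                  = (if l = i then \<one>\<^bsub>R\<^esub> else \<zero>\<^bsub>R\<^esub>)))"

definition is_PIR_code ::
  "nat ring \<Rightarrow> nat \<Rightarrow> nat \<Rightarrow> nat \<Rightarrow> nat \<Rightarrow> (nat \<Rightarrow> nat \<Rightarrow> nat \<Rightarrow> nat) \<Rightarrow> bool" where
  "is_PIR_code R t m p k C \<longleftrightarrow> array_code R t m p C \<and>
     (\<forall>i<p. \<exists>S :: nat \<Rightarrow> nat set.
        (\<forall>a<k. S a \<subseteq> {..<m}) \<and>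
        (\<forall>a<k. \<forall>b<k. a \<noteq> b \<longrightarrow> S a \<inter> S b = {}) \<and>
        (\<forall>a<k. in_span_of_columns R t p C i (S a)))"

definition PIR_rates :: "real \<Rightarrow> nat \<Rightarrow> real set" where
  "PIR_rates s t = {real k / real m | k m. \<exists>R p C. field R \<and> finite (carrier R) \<and>
      0 < m \<and> 0 < k \<and> real p = s * real t \<and> is_PIR_code R t m p k C}"

definition g :: "real \<Rightarrow> nat \<Rightarrow> real" where
  "g s t = Sup (PIR_rates s t)"

end

theory Submission
  imports Defs "HOL-Combinatorics.Multiset_Permutations" "HOL-Library.Disjoint_Sets"
begin

text \<open>The code lives over GF(2) with \<open>3t\<close> variables and \<open>t\<close> rows. For every permutation of the
  variables it contains columns of three types, with multiplicities \<open>(t+1)(2t+1)\<close>, \<open>2t(2t+1)\<close> and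
  \<open>2t\<^sup>2\<close>: type 0 stores the first \<open>t\<close> variables singly, types \<open>k = 1, 2\<close> store the variables at
  positions \<open>kt+1, \<dots>, (k+1)t-1\<close> singly and the sum of the first \<open>kt+1\<close> in the last row.
  For a fixed \<open>x\<^sub>i\<close>, every column except the type-1 columns that do not store \<open>x\<^sub>i\<close> singly is
  "main", and each main column recovers \<open>x\<^sub>i\<close> alone or together with a private non-main type-1
  partner column, whose prefix sum differs from a sum available in the main column exactly by \<open>x\<^sub>i\<close>.
  These recovery groups are disjoint, so the PIR rate is the proportion of main columns; as the
  position of \<open>i\<close> is uniform over the permutations, it equals
  \<open>(16t\<^sup>2+7t+1)/(24t\<^sup>2+15t+3)\<close>.\<close>

definition GF2 :: "nat ring" where
  "GF2 = \<lparr>carrier = {0, 1}, monoid.mult = (\<lambda>a b. (a * b) mod 2), one = 1, zero = 0,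
          add = (\<lambda>a b. (a + b) mod 2)\<rparr>"

lemma GF2_simps [simp]:
  "carrier GF2 = {0, 1}" "a \<otimes>\<^bsub>GF2\<^esub> b = (a * b) mod 2" "\<one>\<^bsub>GF2\<^esub> = 1"
  "\<zero>\<^bsub>GF2\<^esub> = 0" "a \<oplus>\<^bsub>GF2\<^esub> b = (a + b) mod 2"
  by (simp_all add: GF2_def)

lemma cring_GF2: "cring GF2"
proof (rule cringI)
  show "abelian_group GF2"
    by (rule abelian_groupI) (auto simp: mod_add_left_eq mod_add_right_eq add.assoc add.commute)
  show "comm_monoid GF2"
    by (rule comm_monoidI) (auto simp: mod_mult_left_eq mod_mult_right_eq mult.assoc mult.commute)
qed (auto simp: mod_add_left_eq mod_add_right_eq distrib_right)

lemma field_GF2: "field GF2"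
proof -
  interpret cring GF2 by (rule cring_GF2)
  show ?thesis
    by (rule cring_fieldI2) auto
qed

lemma finsum_GF2:
  assumes "finite A" "f ` A \<subseteq> {0, 1}"
  shows "finsum GF2 f A = (\<Sum>x\<in>A. f x) mod 2"
proof -
  interpret cring GF2 by (rule cring_GF2)
  show ?thesis
    using assms
  proof (induction A rule: finite_induct)
    case (insert x A)
    then have "finsum GF2 f (insert x A) = f x \<oplus>\<^bsub>GF2\<^esub> finsum GF2 f A"
      by (intro finsum_insert) auto
    with insert show ?case by (simp add: mod_add_right_eq)
  qed simp
qed

text \<open>\<open>cell c r\<close> is the set of variables whose sum is stored in row \<open>r\<close> of column \<open>c\<close>, so over
  GF(2) the condition says that the cells in \<open>W\<close> sum to \<open>x\<^sub>i\<close>.\<close>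

definition parity_recovers :: "('c \<Rightarrow> nat \<Rightarrow> nat set) \<Rightarrow> nat \<Rightarrow> nat \<Rightarrow> ('c \<times> nat) set \<Rightarrow> bool" where
  "parity_recovers cell p i W \<longleftrightarrow>
     (\<forall>l<p. odd (\<Sum>(c, r)\<in>W. of_bool (l \<in> cell c r) :: nat) \<longleftrightarrow> l = i)"

lemma in_span_of_columns_GF2I:
  assumes h: "inj_on h S" and S: "finite S" and W: "W \<subseteq> h ` S \<times> {..<t}"
    and rec: "parity_recovers cell p i W"
  shows "in_span_of_columns GF2 t p (\<lambda>r j l. of_bool (l \<in> cell (h j) r)) i S"
  unfolding in_span_of_columns_def
proof (intro exI[of _ "\<lambda>r j. of_bool ((h j, r) \<in> W)"] conjI allI impI)
  fix l assume "l < p"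
  let ?f = "\<lambda>(c, r). of_bool ((c, r) \<in> W \<and> l \<in> cell c r) :: nat"
  have swap: "bij_betw (\<lambda>(r, j). (h j, r)) ({..<t} \<times> S) (h ` S \<times> {..<t})"
    using h by (auto simp: bij_betw_def inj_on_def)
  have "finsum GF2 (\<lambda>(r, j). of_bool ((h j, r) \<in> W) \<otimes>\<^bsub>GF2\<^esub> of_bool (l \<in> cell (h j) r))
          ({..<t} \<times> S) = finsum GF2 (?f \<circ> (\<lambda>(r, j). (h j, r))) ({..<t} \<times> S)"
    by (intro arg_cong2[where f = "finsum GF2"]) auto
  also have "\<dots> = (\<Sum>x\<in>{..<t} \<times> S. (?f \<circ> (\<lambda>(r, j). (h j, r))) x) mod 2"
    using S by (intro finsum_GF2) auto
  also have "(\<Sum>x\<in>{..<t} \<times> S. (?f \<circ> (\<lambda>(r, j). (h j, r))) x) = sum ?f (h ` S \<times> {..<t})"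
    using sum.reindex_bij_betw[OF swap, of ?f] by (simp add: comp_def)
  also have "\<dots> = (\<Sum>(c, r)\<in>W. of_bool (l \<in> cell c r))"
    using S W by (intro sum.mono_neutral_cong_right) auto
  finally show "finsum GF2 (\<lambda>(r, j). of_bool ((h j, r) \<in> W) \<otimes>\<^bsub>GF2\<^esub> of_bool (l \<in> cell (h j) r))
      ({..<t} \<times> S) = (if l = i then \<one>\<^bsub>GF2\<^esub> else \<zero>\<^bsub>GF2\<^esub>)"
    using rec \<open>l < p\<close> unfolding parity_recovers_def
    by (auto simp: odd_iff_mod_2_eq_one even_iff_mod_2_eq_zero)
qed simp

lemma is_PIR_code_GF2I:
  fixes cell :: "'c \<Rightarrow> nat \<Rightarrow> nat set"
  assumes h: "bij_betw h {..<m} Cols"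
    and M: "\<And>i. i < p \<Longrightarrow> finite (M i) \<and> card (M i) = k"
    and W: "\<And>i x. i < p \<Longrightarrow> x \<in> M i \<Longrightarrow> W i x \<subseteq> Cols \<times> {..<t}"
    and disjoint: "\<And>i x y. i < p \<Longrightarrow> x \<in> M i \<Longrightarrow> y \<in> M i \<Longrightarrow> x \<noteq> y \<Longrightarrow>
        fst ` W i x \<inter> fst ` W i y = {}"
    and rec: "\<And>i x. i < p \<Longrightarrow> x \<in> M i \<Longrightarrow> parity_recovers cell p i (W i x)"
  shows "is_PIR_code GF2 t m p k (\<lambda>r j l. of_bool (l \<in> cell (h j) r))"
  unfolding is_PIR_code_def array_code_def
proof (intro conjI allI impI)
  fix i assume i: "i < p"
  obtain e where e: "bij_betw e {..<k} (M i)"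
    using ex_bij_betw_nat_finite[of "M i"] M[OF i] by (auto simp: atLeast0LessThan)
  then have eM: "e a \<in> M i" if "a < k" for a
    using that by (auto dest: bij_betwE)
  define S where "S a = {j \<in> {..<m}. h j \<in> fst ` W i (e a)}" for a
  show "\<exists>S. (\<forall>a<k. S a \<subseteq> {..<m}) \<and> (\<forall>a<k. \<forall>b<k. a \<noteq> b \<longrightarrow> S a \<inter> S b = {}) \<and>
      (\<forall>a<k. in_span_of_columns GF2 t p (\<lambda>r j l. of_bool (l \<in> cell (h j) r)) i (S a))"
  proof (intro exI[of _ S] conjI allI impI)
    fix a b assume "a < k" "b < k" "a \<noteq> b"
    then have "e a \<noteq> e b"
      using e by (auto simp: bij_betw_def inj_on_def)
    then show "S a \<inter> S b = {}"
      using disjoint[OF i eM eM] \<open>a < k\<close> \<open>b < k\<close> by (auto simp: S_def)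
  next
    fix a assume "a < k"
    have "W i (e a) \<subseteq> h ` S a \<times> {..<t}"
    proof
      fix x assume x: "x \<in> W i (e a)"
      then obtain j where "j < m" "fst x = h j"
        using W[OF i eM[OF \<open>a < k\<close>]] h by (force simp: bij_betw_def)
      with x W[OF i eM[OF \<open>a < k\<close>]] show "x \<in> h ` S a \<times> {..<t}"
        by (force simp: S_def)
    qed
    then show "in_span_of_columns GF2 t p (\<lambda>r j l. of_bool (l \<in> cell (h j) r)) i (S a)"
      using h rec[OF i eM[OF \<open>a < k\<close>]]
      by (intro in_span_of_columns_GF2I) (auto simp: S_def bij_betw_def intro: inj_on_subset)
  qed (auto simp: S_def)
qed simp

lemma is_PIR_code_le_length:
  assumes "field R" "is_PIR_code R t m p k C" "0 < p"
  shows "k \<le> m"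
proof -
  interpret field R by (rule assms(1))
  obtain S :: "nat \<Rightarrow> nat set" where S: "\<forall>a<k. S a \<subseteq> {..<m}"
      "\<forall>a<k. \<forall>b<k. a \<noteq> b \<longrightarrow> S a \<inter> S b = {}" "\<forall>a<k. in_span_of_columns R t p C 0 (S a)"
    using assms(2) \<open>0 < p\<close> unfolding is_PIR_code_def by (elim conjE allE[of _ 0]) blast
  have nonempty: "S a \<noteq> {}" if "a < k" for a
  proof
    assume "S a = {}"
    with S(3) that obtain c where
      "\<forall>l<p. finsum R (\<lambda>(r, j). c r j \<otimes>\<^bsub>R\<^esub> C r j l) {}
          = (if l = 0 then \<one>\<^bsub>R\<^esub> else \<zero>\<^bsub>R\<^esub>)"
      unfolding in_span_of_columns_def by auto
    from this[rule_format, OF assms(3)] show False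
      by simp
  qed
  define f where "f a = (SOME j. j \<in> S a)" for a
  have f: "f a \<in> S a" if "a < k" for a
    using nonempty[OF that] unfolding f_def by (simp add: some_in_eq)
  have "inj_on f {..<k}"
  proof (rule inj_onI)
    fix a b assume "a \<in> {..<k}" "b \<in> {..<k}" "f a = f b"
    then show "a = b"
      using f[of a] f[of b] S(2) by auto
  qed
  moreover have "f ` {..<k} \<subseteq> {..<m}"
    using f S(1) by auto
  ultimately show ?thesis
    using card_inj_on_le[of f "{..<k}" "{..<m}"] by simp
qed

lemma PIR_rate_le_g:
  assumes "field R" "finite (carrier R)" "0 < m" "0 < k" "0 < p" "real p = s * real t"
    and "is_PIR_code R t m p k C"
  shows "real k / real m \<le> g s t"
  unfolding g_def
proof (rule cSup_upper)
  show "real k / real m \<in> PIR_rates s t"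
    unfolding PIR_rates_def using assms by (intro CollectI exI[of _ k] exI[of _ m]) blast
  show "bdd_above (PIR_rates s t)"
  proof (rule bdd_aboveI)
    fix x assume "x \<in> PIR_rates s t"
    then obtain k' m' R' p' C' where "x = real k' / real m'" "field R'" "0 < m'"
        "real p' = s * real t" "is_PIR_code R' t m' p' k' C'"
      unfolding PIR_rates_def by blast
    moreover have "0 < p'"
      using assms(5,6) \<open>real p' = s * real t\<close> by linarith
    ultimately show "x \<le> 1"
      using is_PIR_code_le_length by simp
  qed
qed

fun index_of :: "'a list \<Rightarrow> 'a \<Rightarrow> nat" where
  "index_of [] a = 0"
| "index_of (x # xs) a = (if x = a then 0 else Suc (index_of xs a))"

definition insert_at :: "nat \<Rightarrow> 'a \<Rightarrow> 'a list \<Rightarrow> 'a list" where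
  "insert_at q a ys = take q ys @ a # drop q ys"

lemma index_of_less: "a \<in> set xs \<Longrightarrow> index_of xs a < length xs"
  by (induction xs) auto

lemma nth_index_of: "a \<in> set xs \<Longrightarrow> xs ! index_of xs a = a"
  by (induction xs) auto

lemma insert_at_remove1:
  "a \<in> set xs \<Longrightarrow> distinct xs \<Longrightarrow> insert_at (index_of xs a) a (remove1 a xs) = xs"
  by (induction xs) (auto simp: insert_at_def)

lemma index_of_insert_at: "a \<notin> set ys \<Longrightarrow> q \<le> length ys \<Longrightarrow> index_of (insert_at q a ys) a = q"
proof (induction ys arbitrary: q)
  case (Cons y ys)
  then show ?case by (cases q) (auto simp: insert_at_def)
qed (simp add: insert_at_def)

lemma remove1_insert_at: "a \<notin> set ys \<Longrightarrow> remove1 a (insert_at q a ys) = ys"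
  by (auto simp: insert_at_def remove1_append dest: in_set_takeD)

lemma length_insert_at: "q \<le> length ys \<Longrightarrow> length (insert_at q a ys) = Suc (length ys)"
  by (simp add: insert_at_def)

lemma insert_at_in_permutations_of_set:
  assumes "ys \<in> permutations_of_set (A - {a})" "a \<in> A"
  shows "insert_at q a ys \<in> permutations_of_set A"
proof -
  have "set ys = set (take q ys) \<union> set (drop q ys)"
    by (metis append_take_drop_id set_append)
  moreover have "set (take q ys) \<inter> set (drop q ys) = {}"
    using assms by (intro set_take_disj_set_drop_if_distinct) (auto dest: permutations_of_setD)
  ultimately show ?thesis
    using assms by (auto simp: insert_at_def permutations_of_set_def dest: in_set_takeD in_set_dropD)
qed

lemma take_insert_at_le: "n \<le> q \<Longrightarrow> q \<le> length ys \<Longrightarrow> take n (insert_at q a ys) = take n ys"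
  by (simp add: insert_at_def min_def)

lemma set_take_insert_at:
  assumes "q < n" "q \<le> length ys"
  shows "set (take n (insert_at q a ys)) = insert a (set (take (n - 1) ys))"
proof -
  have "n - q = Suc (n - Suc q)"
    using assms by simp
  then have "take n (insert_at q a ys) = take q ys @ a # take (n - Suc q) (drop q ys)"
    using assms by (simp add: insert_at_def)
  also have "set \<dots> = insert a (set (take (q + (n - Suc q)) ys))"
    by (simp add: take_add)
  finally show ?thesis
    using assms by simp
qed

lemma card_permutations_of_set_index_of_in:
  assumes "finite A" "a \<in> A" "Q \<subseteq> {..<card A}"
  shows "card {xs \<in> permutations_of_set A. index_of xs a \<in> Q} = card Q * fact (card A - 1)"
proof -
  let ?P = "permutations_of_set (A - {a})" and ?ins = "\<lambda>(ys, q). insert_at q a ys"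
  have len: "length ys = card A - 1" if "ys \<in> ?P" for ys
    using that assms by (simp add: length_finite_permutations_of_set)
  have notin: "a \<notin> set ys" if "ys \<in> ?P" for ys
    using that by (auto dest: permutations_of_setD)
  have "bij_betw ?ins (?P \<times> Q) {xs \<in> permutations_of_set A. index_of xs a \<in> Q}"
  proof (rule bij_betw_byWitness[where f' = "\<lambda>xs. (remove1 a xs, index_of xs a)"])
    show "\<forall>yq \<in> ?P \<times> Q. (remove1 a (?ins yq), index_of (?ins yq) a) = yq"
      using assms len notin by (auto simp: remove1_insert_at index_of_insert_at)
    show "\<forall>xs \<in> {xs \<in> permutations_of_set A. index_of xs a \<in> Q}.
            ?ins (remove1 a xs, index_of xs a) = xs"
      using assms by (auto simp: insert_at_remove1 permutations_of_set_def)
    show "?ins ` (?P \<times> Q) \<subseteq> {xs \<in> permutations_of_set A. index_of xs a \<in> Q}"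
      using assms len notin
      by (auto simp: index_of_insert_at insert_at_in_permutations_of_set)
    show "(\<lambda>xs. (remove1 a xs, index_of xs a)) ` {xs \<in> permutations_of_set A. index_of xs a \<in> Q}
            \<subseteq> ?P \<times> Q"
      by (auto simp: permutations_of_set_def set_remove1_eq)
  qed
  then have "card {xs \<in> permutations_of_set A. index_of xs a \<in> Q} = card (?P \<times> Q)"
    by (simp add: bij_betw_same_card)
  also have "\<dots> = card Q * fact (card A - 1)"
    using assms finite_subset[OF assms(3)] by (simp add: card_cartesian_product)
  finally show ?thesis .
qed

lemma sum_of_bool_mem_disjoint_family:
  assumes "finite R" "disjoint_family_on F R"
  shows "(\<Sum>r\<in>R. of_bool (l \<in> F r) :: nat) = of_bool (l \<in> (\<Union>r\<in>R. F r))"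
proof (cases "l \<in> (\<Union>r\<in>R. F r)")
  case True
  then obtain r0 where "r0 \<in> R" "l \<in> F r0"
    by auto
  with assms(2) have "R \<inter> {r. l \<in> F r} = {r0}"
    by (auto simp: disjoint_family_on_def)
  with assms(1) True show ?thesis
    by simp
qed (use assms in auto)

text \<open>A column \<open>(k, xs, a, b)\<close> has type \<open>k\<close> and permutation \<open>xs\<close>; \<open>(a, b)\<close> only numbers the
  copies.\<close>

type_synonym column = "nat \<times> nat list \<times> nat \<times> nat"

definition columns :: "nat \<Rightarrow> column set" where
  "columns t = ({0} \<times> permutations_of_set {..<3*t} \<times> {..<t+1} \<times> {..<2*t+1})
     \<union> ({1} \<times> permutations_of_set {..<3*t} \<times> {..<2*t} \<times> {..<2*t+1})
     \<union> ({2} \<times> permutations_of_set {..<3*t} \<times> {..<t} \<times> {..<2*t})"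

definition row_positions :: "nat \<Rightarrow> nat \<Rightarrow> nat \<Rightarrow> nat set" where
  "row_positions t k r = (if k = 0 then {r} else if r < t - 1 then {k*t + 1 + r} else {..<k*t + 1})"

fun cell :: "nat \<Rightarrow> column \<Rightarrow> nat \<Rightarrow> nat set" where
  "cell t (k, xs, a, b) r = nth xs ` row_positions t k r"

lemma disjoint_family_on_row_positions: "disjoint_family_on (row_positions t k) {..<t}"
  by (auto simp: disjoint_family_on_def row_positions_def)

lemma UN_row_positions:
  assumes "0 < t"
  shows "(\<Union>r<t. row_positions t k r) = {..<(k+1)*t}"
proof (cases "k = 0")
  case False
  have "q \<in> (\<Union>r<t. row_positions t k r)" if "q < (k+1)*t" for q
  proof (cases "q < k*t + 1")
    case True
    with False have "q \<in> row_positions t k (t - 1)"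
      by (simp add: row_positions_def)
    with assms show ?thesis
      by (intro UN_I[of "t - 1"]) auto
  next
    case False
    then have "q = k*t + 1 + (q - (k*t + 1))" "q - (k*t + 1) < t - 1"
      using that by auto
    with \<open>k \<noteq> 0\<close> show ?thesis
      by (auto simp: row_positions_def intro!: bexI[of _ "q - (k*t + 1)"])
  qed
  moreover have "(\<Union>r<t. row_positions t k r) \<subseteq> {..<(k+1)*t}"
    using False assms by (auto simp: row_positions_def)
  ultimately show ?thesis
    by auto
qed (auto simp: row_positions_def)

lemma column_in_permutations:
  "(k, xs, a, b) \<in> columns t \<Longrightarrow> xs \<in> permutations_of_set {..<3*t}"
  by (auto simp: columns_def)

lemma length_column: "(k, xs, a, b) \<in> columns t \<Longrightarrow> length xs = 3*t"
  by (auto dest!: column_in_permutations simp: length_finite_permutations_of_set)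

lemma disjoint_family_on_cell:
  assumes c: "(k, xs, a, b) \<in> columns t"
  shows "disjoint_family_on (cell t (k, xs, a, b)) {..<t}"
  unfolding disjoint_family_on_def
proof (intro ballI impI)
  fix r r' assume r: "r \<in> {..<t}" "r' \<in> {..<t}" "r \<noteq> r'"
  have "row_positions t k q \<subseteq> {..<length xs}" if "q < t" for q
  proof -
    have "row_positions t k q \<subseteq> (\<Union>r<t. row_positions t k r)"
      using that by blast
    also have "\<dots> \<subseteq> {..<length xs}"
      using UN_row_positions[of t k] that c length_column[OF c] by (auto simp: columns_def)
    finally show ?thesis .
  qed
  moreover have "inj_on (nth xs) {..<length xs}"
    using column_in_permutations[OF c] by (simp add: inj_on_nth permutations_of_set_def)
  ultimately have "cell t (k, xs, a, b) r \<inter> cell t (k, xs, a, b) r'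
      = nth xs ` (row_positions t k r \<inter> row_positions t k r')"
    using r by (simp add: inj_on_image_Int)
  also have "\<dots> = {}"
    using disjoint_family_on_row_positions r unfolding disjoint_family_on_def by blast
  finally show "cell t (k, xs, a, b) r \<inter> cell t (k, xs, a, b) r' = {}" .
qed

lemma sum_cells_column:
  assumes c: "(k, xs, a, b) \<in> columns t" and "0 < t"
  shows "(\<Sum>r<t. of_bool (l \<in> cell t (k, xs, a, b) r) :: nat) = of_bool (l \<in> set (take ((k+1)*t) xs))"
proof -
  have "(\<Sum>r<t. of_bool (l \<in> cell t (k, xs, a, b) r) :: nat)
      = of_bool (l \<in> (\<Union>r<t. cell t (k, xs, a, b) r))"
    by (rule sum_of_bool_mem_disjoint_family[OF finite_lessThan disjoint_family_on_cell[OF c]])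
  also have "(\<Union>r<t. cell t (k, xs, a, b) r) = set (take ((k+1)*t) xs)"
  proof -
    have "k \<le> 2"
      using c by (auto simp: columns_def)
    then have "(k+1)*t \<le> length xs"
      using length_column[OF c] by simp
    then show ?thesis
      using UN_row_positions[OF \<open>0 < t\<close>, of k]
      by (simp add: image_UN[symmetric] nth_image[symmetric] atLeast0LessThan)
  qed
  finally show ?thesis .
qed

definition main_columns :: "nat \<Rightarrow> nat \<Rightarrow> column set" where
  "main_columns t i = {c \<in> columns t. fst c = 1 \<longrightarrow> index_of (fst (snd c)) i \<in> {t+1..<2*t}}"

text \<open>A main column needs a partner iff it does not store \<open>x\<^sub>i\<close> singly. The partner is the type-1
  column obtained by moving \<open>i\<close> to the position given by a copy index, chosen so that a sum available
  in the partner differs from one in the main column exactly by \<open>x\<^sub>i\<close>. That position is \<open>\<le> t\<close> or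
  \<open>\<ge> 2t\<close>, so partners are not main, and \<open>unpartner\<close> reads the original column back off it.\<close>

fun has_partner :: "nat \<Rightarrow> nat \<Rightarrow> column \<Rightarrow> bool" where
  "has_partner t i (k, xs, a, b) \<longleftrightarrow> k = 0 \<and> t \<le> index_of xs i \<or> k = 2 \<and> index_of xs i \<le> 2*t"

fun partner :: "nat \<Rightarrow> nat \<Rightarrow> column \<Rightarrow> column" where
  "partner t i (k, xs, a, b) =
     (if k = 0 then (1, insert_at a i (remove1 i xs), index_of xs i - t, b)
      else (1, insert_at (2*t + a) i (remove1 i xs), b, index_of xs i))"

fun unpartner :: "nat \<Rightarrow> nat \<Rightarrow> column \<Rightarrow> column" where
  "unpartner t i (k, zs, a, b) =
     (if index_of zs i \<le> t then (0, insert_at (t + a) i (remove1 i zs), index_of zs i, b)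
      else (2, insert_at b i (remove1 i zs), index_of zs i - 2*t, a))"

fun recovery_set :: "nat \<Rightarrow> nat \<Rightarrow> column \<Rightarrow> (column \<times> nat) set" where
  "recovery_set t i (k, xs, a, b) =
     (let c = (k, xs, a, b); p = index_of xs i in
      if k = 0 \<and> t \<le> p then Pair c ` {..<t} \<union> {(partner t i c, t - 1)}
      else if k = 2 \<and> p \<le> 2*t then {(c, t - 1)} \<union> Pair (partner t i c) ` {..<t}
      else {(c, if k = 0 then p else p - (k*t + 1))})"

lemma column_remove1:
  assumes "(k, xs, a, b) \<in> columns t" "i < 3*t"
  shows "index_of xs i < 3*t" "xs ! index_of xs i = i"
    "insert_at (index_of xs i) i (remove1 i xs) = xs"
    "remove1 i xs \<in> permutations_of_set ({..<3*t} - {i})" "i \<notin> set (remove1 i xs)"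
    "length (remove1 i xs) = 3*t - 1"
proof -
  have xs: "set xs = {..<3*t}" "distinct xs"
    using column_in_permutations[OF assms(1)] by (auto dest: permutations_of_setD)
  with assms(2) show "index_of xs i < 3*t" "xs ! index_of xs i = i"
      "insert_at (index_of xs i) i (remove1 i xs) = xs" "i \<notin> set (remove1 i xs)"
    using index_of_less[of i xs] length_column[OF assms(1)]
    by (auto simp: nth_index_of insert_at_remove1)
  show "remove1 i xs \<in> permutations_of_set ({..<3*t} - {i})"
    using xs by (auto simp: permutations_of_set_def set_remove1_eq)
  show "length (remove1 i xs) = 3*t - 1"
    using xs assms(2) length_column[OF assms(1)] by (simp add: length_remove1)
qed

lemma partner_in_columns:
  assumes c: "(k, xs, a, b) \<in> columns t" and "i < 3*t" "has_partner t i (k, xs, a, b)"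
  shows "partner t i (k, xs, a, b) \<in> columns t"
proof -
  note R = column_remove1[OF c \<open>i < 3*t\<close>]
  have "insert_at q i (remove1 i xs) \<in> permutations_of_set {..<3*t}" for q
    using R(4) \<open>i < 3*t\<close> by (intro insert_at_in_permutations_of_set) auto
  with assms R(1) show ?thesis
    by (auto simp: columns_def)
qed

lemma index_of_partner:
  assumes c: "(k, xs, a, b) \<in> columns t" and "i < 3*t" "0 < t" "has_partner t i (k, xs, a, b)"
  shows "index_of (fst (snd (partner t i (k, xs, a, b)))) i = (if k = 0 then a else 2*t + a)"
proof -
  note R = column_remove1[OF c \<open>i < 3*t\<close>]
  have "(if k = 0 then a else 2*t + a) \<le> length (remove1 i xs)"
    using c \<open>0 < t\<close> R(6) assms(4) by (auto simp: columns_def)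
  with R(5) show ?thesis
    by (auto simp: index_of_insert_at)
qed

lemma partner_not_main:
  assumes "(k, xs, a, b) \<in> columns t" "i < 3*t" "0 < t" "has_partner t i (k, xs, a, b)"
  shows "partner t i (k, xs, a, b) \<notin> main_columns t i"
  using index_of_partner[OF assms] assms(1) by (auto simp: main_columns_def columns_def)

lemma unpartner_partner:
  assumes c: "(k, xs, a, b) \<in> columns t" and "i < 3*t" "0 < t" "has_partner t i (k, xs, a, b)"
  shows "unpartner t i (partner t i (k, xs, a, b)) = (k, xs, a, b)"
proof -
  note R = column_remove1[OF c \<open>i < 3*t\<close>]
  have remove: "remove1 i (fst (snd (partner t i (k, xs, a, b)))) = remove1 i xs"
    using R(5) by (simp add: remove1_insert_at)
  show ?thesis
    using index_of_partner[OF assms] remove R(3) assms(1,4)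
    by (auto simp: columns_def split: if_splits)
qed

lemma cell_last_row:
  "0 < k \<Longrightarrow> k*t + 1 \<le> length xs \<Longrightarrow> cell t (k, xs, a, b) (t - 1) = set (take (k*t + 1) xs)"
  by (simp add: row_positions_def nth_image[symmetric] atLeast0LessThan)

lemma odd_of_bool_insert: "i \<notin> Y \<Longrightarrow> odd (of_bool (l \<in> insert i Y) + of_bool (l \<in> Y) :: nat) \<longleftrightarrow> l = i"
  by auto

lemma recovery_set_subset:
  assumes "c \<in> main_columns t i" "i < 3*t" "0 < t"
  shows "recovery_set t i c \<subseteq> columns t \<times> {..<t}"
proof -
  obtain k xs a b where c: "c = (k, xs, a, b)"
    by (cases c) auto
  have col: "(k, xs, a, b) \<in> columns t"
    using assms(1) c by (simp add: main_columns_def)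
  have "partner t i (k, xs, a, b) \<in> columns t" if "has_partner t i (k, xs, a, b)"
    by (rule partner_in_columns[OF col assms(2) that])
  with col assms column_remove1(1)[OF col assms(2)] show ?thesis
    unfolding c by (auto simp: Let_def main_columns_def columns_def)
qed

lemma recovery_set_column_cases:
  assumes "c \<in> main_columns t i" "i < 3*t" "0 < t" "x \<in> fst ` recovery_set t i c"
  shows "x = c \<or> x \<notin> main_columns t i \<and> unpartner t i x = c"
proof -
  obtain k xs a b where c: "c = (k, xs, a, b)"
    by (cases c) auto
  have col: "(k, xs, a, b) \<in> columns t"
    using assms(1) c by (simp add: main_columns_def)
  have "x = c \<or> x = partner t i c \<and> has_partner t i c"
    using assms(4) unfolding c by (auto simp: Let_def split: if_splits)
  then show ?thesis
    using partner_not_main[OF col assms(2,3)] unpartner_partner[OF col assms(2,3)] c by auto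
qed

lemma recovery_sets_disjoint:
  assumes "c \<in> main_columns t i" "c' \<in> main_columns t i" "c \<noteq> c'" "i < 3*t" "0 < t"
  shows "fst ` recovery_set t i c \<inter> fst ` recovery_set t i c' = {}"
  using recovery_set_column_cases[OF assms(1,4,5)] recovery_set_column_cases[OF assms(2,4,5)] assms(1-3)
  by blast

lemma sum_Pair_image: "(\<Sum>(c, r)\<in>Pair c' ` R. f c r) = (\<Sum>r\<in>R. f c' r)"
  by (subst sum.reindex) (auto simp: inj_on_def)

lemma odd_cells_recovery_set_type0:
  assumes col: "(0, xs, a, b) \<in> columns t" and "i < 3*t" "0 < t" "t \<le> index_of xs i"
  shows "odd (\<Sum>(c, r)\<in>recovery_set t i (0, xs, a, b). of_bool (l \<in> cell t c r) :: nat) \<longleftrightarrow> l = i"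
proof -
  define p where "p = index_of xs i"
  define ys where "ys = remove1 i xs"
  define zs where "zs = insert_at a i ys"
  note R = column_remove1[OF col \<open>i < 3*t\<close>, folded p_def ys_def]
  have a: "a \<le> t"
    using col by (auto simp: columns_def)
  have W: "recovery_set t i (0, xs, a, b) = insert ((1, zs, p - t, b), t - 1) (Pair (0, xs, a, b) ` {..<t})"
    using assms(4) by (simp add: p_def ys_def zs_def)
  have "((1 :: nat, zs, p - t, b), t - 1) \<notin> Pair (0, xs, a, b) ` {..<t}"
    by auto
  then have "(\<Sum>(c, r)\<in>recovery_set t i (0, xs, a, b). of_bool (l \<in> cell t c r) :: nat)
      = of_bool (l \<in> cell t (1, zs, p - t, b) (t - 1)) + (\<Sum>r<t. of_bool (l \<in> cell t (0, xs, a, b) r))"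
    unfolding W by (simp add: sum_Pair_image del: sum_of_bool_eq cell.simps)
  also have "(\<Sum>r<t. of_bool (l \<in> cell t (0, xs, a, b) r) :: nat) = of_bool (l \<in> set (take t xs))"
    using sum_cells_column[OF col \<open>0 < t\<close>] by (simp del: sum_of_bool_eq cell.simps)
  also have "cell t (1, zs, p - t, b) (t - 1) = insert i (set (take t ys))"
    using a R(6) \<open>0 < t\<close> cell_last_row[of 1 t zs] set_take_insert_at[of a "t + 1" ys i]
    by (simp add: zs_def length_insert_at)
  also have "take t xs = take t ys"
    using assms(4) R(1,3,6) take_insert_at_le[of t p ys i] by (simp add: p_def)
  finally show ?thesis
    using odd_of_bool_insert[of i "set (take t ys)" l] R(5) by (auto dest: in_set_takeD)
qed

lemma odd_cells_recovery_set_type2: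
  assumes col: "(2, xs, a, b) \<in> columns t" and "i < 3*t" "0 < t" "index_of xs i \<le> 2*t"
  shows "odd (\<Sum>(c, r)\<in>recovery_set t i (2, xs, a, b). of_bool (l \<in> cell t c r) :: nat) \<longleftrightarrow> l = i"
proof -
  define p where "p = index_of xs i"
  define ys where "ys = remove1 i xs"
  define zs where "zs = insert_at (2*t + a) i ys"
  note R = column_remove1[OF col \<open>i < 3*t\<close>, folded p_def ys_def]
  have a: "a < t"
    using col by (auto simp: columns_def)
  have zs: "(1, zs, b, p) \<in> columns t"
    using partner_in_columns[OF col \<open>i < 3*t\<close>] assms(4) by (simp add: p_def ys_def zs_def)
  have W: "recovery_set t i (2, xs, a, b) = insert ((2, xs, a, b), t - 1) (Pair (1, zs, b, p) ` {..<t})"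
    using assms(4) by (simp add: p_def ys_def zs_def)
  have "((2 :: nat, xs, a, b), t - 1) \<notin> Pair (1, zs, b, p) ` {..<t}"
    by auto
  then have "(\<Sum>(c, r)\<in>recovery_set t i (2, xs, a, b). of_bool (l \<in> cell t c r) :: nat)
      = of_bool (l \<in> cell t (2, xs, a, b) (t - 1)) + (\<Sum>r<t. of_bool (l \<in> cell t (1, zs, b, p) r))"
    unfolding W by (simp add: sum_Pair_image del: sum_of_bool_eq cell.simps)
  also have "(\<Sum>r<t. of_bool (l \<in> cell t (1, zs, b, p) r) :: nat) = of_bool (l \<in> set (take (2*t) zs))"
    using sum_cells_column[OF zs \<open>0 < t\<close>] by (simp add: mult_2 del: sum_of_bool_eq cell.simps)
  also have "cell t (2, xs, a, b) (t - 1) = insert i (set (take (2*t) ys))"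
    using assms(4) length_column[OF col] R(3,6) \<open>0 < t\<close> cell_last_row[of 2 t xs]
      set_take_insert_at[of p "2*t + 1" ys i]
    by (simp add: p_def)
  also have "take (2*t) zs = take (2*t) ys"
    using a R(6) take_insert_at_le[of "2*t" "2*t + a" ys i] by (simp add: zs_def)
  finally show ?thesis
    using odd_of_bool_insert[of i "set (take (2*t) ys)" l] R(5) by (auto dest: in_set_takeD)
qed

lemma odd_cells_recovery_set_single:
  assumes main: "(k, xs, a, b) \<in> main_columns t i" and "i < 3*t" "\<not> has_partner t i (k, xs, a, b)"
  shows "odd (\<Sum>(c, r)\<in>recovery_set t i (k, xs, a, b). of_bool (l \<in> cell t c r) :: nat) \<longleftrightarrow> l = i"
proof -
  define p where "p = index_of xs i"
  define r where "r = (if k = 0 then p else p - (k*t + 1))"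
  have col: "(k, xs, a, b) \<in> columns t" and "k = 1 \<Longrightarrow> p \<in> {t+1..<2*t}"
    using main by (simp_all add: main_columns_def p_def)
  moreover note R = column_remove1[OF col \<open>i < 3*t\<close>, folded p_def]
  ultimately have "row_positions t k r = {p}"
    using assms(3) by (auto simp: p_def r_def row_positions_def columns_def)
  then have "cell t (k, xs, a, b) r = {i}"
    using R(2) by simp
  moreover have "recovery_set t i (k, xs, a, b) = {((k, xs, a, b), r)}"
    using assms(3) by (auto simp: p_def r_def Let_def)
  ultimately show ?thesis
    by simp
qed

lemma parity_recovers_recovery_set:
  assumes "c \<in> main_columns t i" "i < 3*t" "0 < t"
  shows "parity_recovers (cell t) (3*t) i (recovery_set t i c)"
proof -
  obtain k xs a b where c: "c = (k, xs, a, b)"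
    by (cases c) auto
  have col: "(k, xs, a, b) \<in> columns t"
    using assms(1) c by (simp add: main_columns_def)
  consider "k = 0" "t \<le> index_of xs i" | "k = 2" "index_of xs i \<le> 2*t"
    | "\<not> has_partner t i (k, xs, a, b)"
    by auto
  then show ?thesis
  proof cases
    case 1
    with col odd_cells_recovery_set_type0[of xs a b t i] assms(2,3) show ?thesis
      by (simp add: c parity_recovers_def del: recovery_set.simps)
  next
    case 2
    with col odd_cells_recovery_set_type2[of xs a b t i] assms(2,3) show ?thesis
      by (simp add: c parity_recovers_def del: recovery_set.simps)
  next
    case 3
    with assms(1,2) odd_cells_recovery_set_single[of k xs a b t i] show ?thesis
      by (simp add: c parity_recovers_def del: recovery_set.simps)
  qed
qed

lemma card_columns: "card (columns t) = fact (3*t) * ((t+1)*(2*t+1) + 2*t*(2*t+1) + t*(2*t))"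
  unfolding columns_def
  by (subst card_Un_disjoint, force, force, force)+ (simp add: card_cartesian_product algebra_simps)

lemma card_main_columns:
  assumes "i < 3*t"
  shows "card (main_columns t i)
    = fact (3*t) * ((t+1)*(2*t+1) + t*(2*t)) + (t - 1) * fact (3*t - 1) * (2*t*(2*t+1))"
proof -
  define P where "P = {xs \<in> permutations_of_set {..<3*t}. index_of xs i \<in> {t+1..<2*t}}"
  have "{t+1..<2*t} \<subseteq> {..<card {..<3*t}}"
    by auto
  then have P: "finite P" "card P = (t - 1) * fact (3*t - 1)"
    using assms card_permutations_of_set_index_of_in[of "{..<3*t}" i "{t+1..<2*t}"]
    by (simp_all add: P_def)
  have "main_columns t i = ({0} \<times> permutations_of_set {..<3*t} \<times> {..<t+1} \<times> {..<2*t+1})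
      \<union> ({1} \<times> P \<times> {..<2*t} \<times> {..<2*t+1})
      \<union> ({2} \<times> permutations_of_set {..<3*t} \<times> {..<t} \<times> {..<2*t})"
    unfolding main_columns_def columns_def P_def by auto
  then show ?thesis
    using P
    by (simp only:, subst card_Un_disjoint, force, force, force)+
      (simp add: card_cartesian_product algebra_simps)
qed

lemma main_columns_ratio:
  assumes "0 < t" "i < 3*t"
  shows "real (card (main_columns t i)) / real (card (columns t))
    = (16 * real t ^ 2 + 7 * real t + 1) / (24 * real t ^ 2 + 15 * real t + 3)"
proof -
  obtain s where t: "t = Suc s"
    using assms(1) gr0_implies_Suc by blast
  define F :: nat where "F = fact (3*s + 2)"
  have fact: "fact (3*t) = 3*t*F" "fact (3*t - 1) = F"
    by (simp_all add: t F_def numeral_3_eq_3)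
  have "card (main_columns t i) = F * t * (16 * t^2 + 7 * t + 1)"
    unfolding card_main_columns[OF assms(2)] fact by (simp add: t algebra_simps power2_eq_square)
  moreover have "card (columns t) = F * t * (24 * t^2 + 15 * t + 3)"
    unfolding card_columns fact by (simp add: algebra_simps power2_eq_square)
  moreover have "real (F * t) \<noteq> 0"
    using assms(1) fact_gt_zero[where 'a = nat, of "3*s + 2", folded F_def] by simp
  ultimately show ?thesis
    by (simp only: of_nat_mult mult_divide_mult_cancel_left) simp
qed

lemma is_PIR_code_columns:
  assumes "0 < t" and h: "bij_betw h {..<card (columns t)} (columns t)"
  shows "is_PIR_code GF2 t (card (columns t)) (3*t) (card (main_columns t 0))
    (\<lambda>r j l. of_bool (l \<in> cell t (h j) r))"
proof (rule is_PIR_code_GF2I[OF h, where M = "main_columns t" and W = "recovery_set t"])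
  fix i assume i: "i < 3*t"
  show "finite (main_columns t i) \<and> card (main_columns t i) = card (main_columns t 0)"
    using card_main_columns[OF i] card_main_columns[of 0 t] assms(1)
    by (simp add: main_columns_def columns_def)
  show "recovery_set t i c \<subseteq> columns t \<times> {..<t}" if "c \<in> main_columns t i" for c
    using that i assms(1) by (rule recovery_set_subset)
  show "fst ` recovery_set t i c \<inter> fst ` recovery_set t i c' = {}"
    if "c \<in> main_columns t i" "c' \<in> main_columns t i" "c \<noteq> c'" for c c'
    using that i assms(1) by (rule recovery_sets_disjoint)
  show "parity_recovers (cell t) (3*t) i (recovery_set t i c)" if "c \<in> main_columns t i" for c
    using that i assms(1) by (rule parity_recovers_recovery_set)
qed

theorem theorem9:
  fixes t :: nat
  assumes "0 < t"
  shows "g 3 t \<ge> (16 * real t ^ 2 + 7 * real t + 1) / (24 * real t ^ 2 + 15 * real t + 3)"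
proof -
  obtain h where h: "bij_betw h {..<card (columns t)} (columns t)"
    using ex_bij_betw_nat_finite[of "columns t"] by (auto simp: columns_def atLeast0LessThan)
  have "real (card (main_columns t 0)) / real (card (columns t)) \<le> g 3 t"
    using is_PIR_code_columns[OF assms h] assms
    by (intro PIR_rate_le_g[OF field_GF2]) (simp_all add: card_columns card_main_columns)
  then show ?thesis
    using main_columns_ratio[OF assms, of 0] assms by simp
qed

end
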